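(* Let $T>0$. Let $g:\mathbb{R}\to\mathbb{R}$ be a continuous, odd, sublinear function, and let $k:\mathbb{R}\to\mathbb{R}$ be a continuous, odd, $T$-periodic function with $\frac{1}{T}\int_0^T k(t)\,dt=0$. Then the equation $$u''+g(u)=k(t)$$ has an odd $T$-periodic solution $u\in C^2(\mathbb{R})$. Moreover, the set of odd $T$-periodic solutions of this equation is bounded in the supremum norm.
   Context: A function $h$ is odd if $h(-x)=-h(x)$ for all $x$. The function $g$ is called sublinear if for every $\varepsilon>0$ there exists $M=M(\varepsilon)>0$ such that $|g(x)|\le M+\varepsilon|x|$ for all $x\in\mathbb{R}$. *)

theory Defs
  imports "HOL-Analysis.Analysis"
begin

definition odd_fun :: "(real \<Rightarrow> real) \<Rightarrow> bool" where
  "odd_fun h \<longleftrightarrow> (\<forall>x. h (-x) = - h x)"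

definition sublinear :: "(real \<Rightarrow> real) \<Rightarrow> bool" where
  "sublinear g \<longleftrightarrow> (\<forall>\<epsilon>>0. \<exists>M>0. \<forall>x. \<bar>g x\<bar> \<le> M + \<epsilon> * \<bar>x\<bar>)"

definition periodic_fun :: "real \<Rightarrow> (real \<Rightarrow> real) \<Rightarrow> bool" where
  "periodic_fun T f \<longleftrightarrow> (\<forall>t. f (t + T) = f t)"

definition C2_solution :: "(real \<Rightarrow> real) \<Rightarrow> (real \<Rightarrow> real) \<Rightarrow> (real \<Rightarrow> real) \<Rightarrow> bool" where
  "C2_solution g k u \<longleftrightarrow>
     (\<exists>u' u''. (\<forall>t. (u has_real_derivative u' t) (at t)) \<and>
               (\<forall>t. (u' has_real_derivative u'' t) (at t)) \<and>
               continuous_on UNIV u'' \<and>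
               (\<forall>t. u'' t + g (u t) = k t))"

end

theory Submission
  imports Defs "HOL-Complex_Analysis.Great_Picard"
begin

text \<open>
  Oddness and \<open>T\<close>-periodicity force a solution to vanish at \<open>0\<close> and \<open>L = T/2\<close>, and an odd
  \<open>T\<close>-periodic function is determined by its values on \<open>[0, L]\<close>. So everything reduces to the
  Dirichlet problem \<open>u'' + g(u) = k\<close>, \<open>u(0) = u(L) = 0\<close>. Choosing \<open>\<epsilon>\<close> with \<open>\<epsilon> L\<^sup>2 \<le> 1/4\<close> in the
  sublinearity bound \<open>|g x| \<le> M + \<epsilon> |x|\<close>, a maximum argument gives \<open>|u| \<le> 2 L\<^sup>2 (K + M)\<close>, where
  \<open>K\<close> bounds \<open>k\<close>; this is the a priori bound.

  Existence is proved without a fixed point theorem. The delay equation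
  \<open>y'' = k(t) - g(y(t - h))\<close> with \<open>y(t) = v t\<close> for \<open>t \<le> 0\<close> is solved by the method of steps; the
  same a priori estimate and the intermediate value theorem in the slope \<open>v\<close> give a solution with
  \<open>y(L) = 0\<close>. These solutions are uniformly bounded and equi-Lipschitz, so by Arzela--Ascoli a
  subsequence converges as \<open>h \<rightarrow> 0\<close> to a solution of the Dirichlet problem in integral form,
  whose odd periodic extension is the required \<open>C\<^sup>2\<close> solution.
\<close>

section \<open>Primitives and the Dirichlet problem\<close>

text \<open>The primitive of \<open>f\<close> vanishing at \<open>0\<close>; one of the two intervals is always degenerate.\<close>
definition prim :: "(real \<Rightarrow> real) \<Rightarrow> real \<Rightarrow> real" where
  "prim f t = integral {0..t} f - integral {t..0} f"

lemma prim_0 [simp]: "prim f 0 = 0"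
  by (simp add: prim_def)

lemma prim_eq_integral_diff:
  assumes f: "continuous_on UNIV f" and "a \<le> 0" "a \<le> x"
  shows "prim f x = integral {a..x} f - integral {a..0} f"
proof (cases "0 \<le> x")
  case True
  have "integral {a..0} f + integral {0..x} f = integral {a..x} f"
    by (rule Henstock_Kurzweil_Integration.integral_combine)
       (use assms True in \<open>auto intro: integrable_continuous_real continuous_on_subset[OF f]\<close>)
  moreover have "integral {x..0} f = 0"
    using True by (cases "x = 0") auto
  ultimately show ?thesis unfolding prim_def by linarith
next
  case False
  have "integral {a..x} f + integral {x..0} f = integral {a..0} f"
    by (rule Henstock_Kurzweil_Integration.integral_combine)
       (use assms False in \<open>auto intro: integrable_continuous_real continuous_on_subset[OF f]\<close>)
  moreover have "integral {0..x} f = 0"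
    using False by auto
  ultimately show ?thesis unfolding prim_def by linarith
qed

lemma has_real_derivative_prim:
  assumes f: "continuous_on UNIV f"
  shows "(prim f has_real_derivative f t) (at t)"
proof -
  define a where "a = min 0 t - 1"
  define b where "b = max 0 t + 1"
  have "((\<lambda>x. integral {a..x} f) has_real_derivative f t) (at t within {a..b})"
    by (rule integral_has_real_derivative)
       (auto simp: a_def b_def intro: continuous_on_subset[OF f])
  moreover have "at t within {a..b} = at t"
    by (rule at_within_Icc_at) (auto simp: a_def b_def)
  ultimately have "((\<lambda>x. integral {a..x} f - integral {a..0} f) has_real_derivative f t) (at t)"
    by (auto intro!: derivative_eq_intros)
  then show ?thesis
    by (rule has_field_derivative_transform_within_open[where S="{a<..<b}"])
       (auto simp: a_def b_def intro!: prim_eq_integral_diff[OF f, symmetric])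
qed

lemma continuous_on_prim: "continuous_on UNIV f \<Longrightarrow> continuous_on UNIV (prim f)"
  by (meson DERIV_isCont continuous_at_imp_continuous_on has_real_derivative_prim)

lemma prim_periodic_shift:
  assumes f: "continuous_on UNIV f" and "periodic_fun P f"
  shows "prim f (x + P) = prim f x + prim f P"
proof -
  have "((\<lambda>x. prim f (x + P) - prim f x) has_real_derivative 0) (at x)" for x
  proof -
    have "((\<lambda>x. prim f (x + P) - prim f x) has_real_derivative f (x + P) * 1 - f x) (at x)"
      by (rule derivative_eq_intros DERIV_chain2[OF has_real_derivative_prim[OF f]]
          has_real_derivative_prim[OF f] | simp)+
    then show ?thesis
      using \<open>periodic_fun P f\<close> by (simp add: periodic_fun_def)
  qed
  from DERIV_isconst_all[OF allI[OF this], of x 0] show ?thesis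
    by simp
qed

lemma prim_even_if_odd:
  assumes f: "continuous_on UNIV f" and "odd_fun f"
  shows "prim f (- x) = prim f x"
proof -
  have "((\<lambda>x. prim f x - prim f (- x)) has_real_derivative 0) (at x)" for x
  proof -
    have "((\<lambda>x. prim f x - prim f (- x)) has_real_derivative f x - f (- x) * - 1) (at x)"
      by (rule derivative_eq_intros DERIV_chain2[OF has_real_derivative_prim[OF f]]
          has_real_derivative_prim[OF f] | simp)+
    then show ?thesis
      using \<open>odd_fun f\<close> by (simp add: odd_fun_def)
  qed
  from DERIV_isconst_all[OF allI[OF this], of x 0] show ?thesis
    by simp
qed

lemma prim_odd_if_even:
  assumes f: "continuous_on UNIV f" and even: "\<And>x. f (- x) = f x"
  shows "odd_fun (prim f)"
  unfolding odd_fun_def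
proof
  fix x
  have "((\<lambda>x. prim f x + prim f (- x)) has_real_derivative 0) (at x)" for x
  proof -
    have "((\<lambda>x. prim f x + prim f (- x)) has_real_derivative f x + f (- x) * - 1) (at x)"
      by (rule derivative_eq_intros DERIV_chain2[OF has_real_derivative_prim[OF f]]
          has_real_derivative_prim[OF f] | simp)+
    then show ?thesis
      by (simp add: even)
  qed
  from DERIV_isconst_all[OF allI[OF this], of x 0] show "prim f (- x) = - prim f x"
    by simp
qed

definition prim0 :: "(real \<Rightarrow> real) \<Rightarrow> real \<Rightarrow> real" where
  "prim0 f t = integral {0..t} f"

abbreviation prim00 :: "(real \<Rightarrow> real) \<Rightarrow> real \<Rightarrow> real" where
  "prim00 f \<equiv> prim0 (prim0 f)"

lemma prim0_nonpos: "t \<le> 0 \<Longrightarrow> prim0 f t = 0"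
  unfolding prim0_def by (cases "t = 0") auto

lemma prim_eq_prim0: "0 \<le> t \<Longrightarrow> prim f t = prim0 f t"
  unfolding prim_def prim0_def by (cases "t = 0") auto

lemma continuous_on_prim0:
  assumes "continuous_on UNIV f"
  shows "continuous_on UNIV (prim0 f)"
proof -
  have "prim0 f = (\<lambda>t. prim f (max 0 t))"
    by (auto simp: prim_eq_prim0 prim0_nonpos max_def)
  then show ?thesis
    by (auto intro!: continuous_on_compose2[OF continuous_on_prim[OF assms]] continuous_intros)
qed

lemma prim00_eq_prim_prim:
  assumes "continuous_on UNIV f" and "0 \<le> t"
  shows "prim (prim f) t = prim00 f t"
proof -
  have "prim (prim f) t = integral {0..t} (prim f)"
    using assms by (simp add: prim_eq_prim0 prim0_def)
  also have "\<dots> = prim00 f t"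
    unfolding prim0_def by (rule integral_cong) (auto simp: prim_eq_prim0 prim0_def)
  finally show ?thesis .
qed

lemma prim0_cong: "(\<And>s. s \<in> {0..t} \<Longrightarrow> f s = g s) \<Longrightarrow> prim0 f t = prim0 g t"
  unfolding prim0_def by (rule integral_cong) auto

lemma prim00_cong: "(\<And>s. s \<in> {0..t} \<Longrightarrow> f s = g s) \<Longrightarrow> prim00 f t = prim00 g t"
  by (rule prim0_cong, rule prim0_cong) auto

lemma prim0_diff:
  assumes "continuous_on {0..t} f" "continuous_on {0..t} g"
  shows "prim0 (\<lambda>s. f s - g s) t = prim0 f t - prim0 g t"
  unfolding prim0_def
  by (rule integral_diff) (use assms in \<open>auto intro: integrable_continuous_real\<close>)

lemma continuous_on_prim0_Icc:
  "continuous_on {0..t} f \<Longrightarrow> continuous_on {0..t} (prim0 f)"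
  unfolding prim0_def by (rule indefinite_integral_continuous_1) (rule integrable_continuous_real)

lemma prim00_diff:
  assumes f: "continuous_on {0..t} f" and g: "continuous_on {0..t} g"
  shows "prim00 (\<lambda>s. f s - g s) t = prim00 f t - prim00 g t"
proof -
  have "prim00 (\<lambda>s. f s - g s) t = prim0 (\<lambda>r. prim0 f r - prim0 g r) t"
    by (rule prim0_cong, rule prim0_diff)
       (auto intro: continuous_on_subset[OF f] continuous_on_subset[OF g])
  also have "\<dots> = prim00 f t - prim00 g t"
    by (rule prim0_diff) (auto intro!: continuous_on_prim0_Icc f g)
  finally show ?thesis .
qed

lemma prim0_diff_bound:
  assumes f: "continuous_on {0..t} f" and t: "0 \<le> t'" "t' \<le> t"
    and bound: "\<And>s. s \<in> {t'..t} \<Longrightarrow> \<bar>f s\<bar> \<le> B"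
  shows "\<bar>prim0 f t - prim0 f t'\<bar> \<le> B * (t - t')"
proof -
  have "integral {0..t'} f + integral {t'..t} f = integral {0..t} f"
    by (rule Henstock_Kurzweil_Integration.integral_combine)
       (use t in \<open>auto intro: integrable_continuous_real f\<close>)
  then have "prim0 f t - prim0 f t' = integral {t'..t} f"
    unfolding prim0_def by linarith
  moreover have "norm (integral {t'..t} f) \<le> B * (t - t')"
    by (rule integral_bound) (use t bound in \<open>auto intro: continuous_on_subset[OF f]\<close>)
  ultimately show ?thesis by simp
qed

lemma prim0_bound:
  assumes "continuous_on {0..t} f" "0 \<le> t" "\<And>s. s \<in> {0..t} \<Longrightarrow> \<bar>f s\<bar> \<le> B"
  shows "\<bar>prim0 f t\<bar> \<le> B * t"
  using prim0_diff_bound[OF assms(1) order_refl assms(2,3)] prim0_nonpos[of 0 f] by simp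

lemma prim00_diff_bound:
  assumes f: "continuous_on {0..t} f" and t: "0 \<le> t'" "t' \<le> t"
    and bound: "\<And>s. s \<in> {0..t} \<Longrightarrow> \<bar>f s\<bar> \<le> B"
  shows "\<bar>prim00 f t - prim00 f t'\<bar> \<le> B * t * (t - t')"
proof (rule prim0_diff_bound[OF continuous_on_prim0_Icc[OF f] t])
  fix r assume r: "r \<in> {t'..t}"
  have "0 \<le> B" using bound[of 0] t by force
  have "\<bar>prim0 f r\<bar> \<le> B * r"
    by (rule prim0_bound) (use r t bound in \<open>auto intro: continuous_on_subset[OF f]\<close>)
  also have "\<dots> \<le> B * t"
    using r \<open>0 \<le> B\<close> by (simp add: mult_left_mono)
  finally show "\<bar>prim0 f r\<bar> \<le> B * t" .
qed

lemma prim00_bound: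
  assumes "continuous_on {0..t} f" "0 \<le> t" "\<And>s. s \<in> {0..t} \<Longrightarrow> \<bar>f s\<bar> \<le> B"
  shows "\<bar>prim00 f t\<bar> \<le> B * t\<^sup>2"
  using prim00_diff_bound[OF assms(1) order_refl assms(2,3)] prim0_nonpos[of 0 "prim0 f"]
  by (simp add: power2_eq_square)

lemma uniform_limit_prim00:
  assumes lim: "uniform_limit {0..R} f f0 F"
    and cont: "\<And>n. continuous_on {0..R} (f n)" "continuous_on {0..R} f0"
  shows "uniform_limit {0..R} (\<lambda>n. prim00 (f n)) (prim00 f0) F"
proof (rule uniform_limitI)
  fix e :: real assume "0 < e"
  define e' where "e' = e / (R\<^sup>2 + 1)"
  have "0 < R\<^sup>2 + 1" by (simp add: add_nonneg_pos)
  then have "0 < e'" using \<open>0 < e\<close> by (simp add: e'_def)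
  from uniform_limitD[OF lim this]
  show "\<forall>\<^sub>F n in F. \<forall>t\<in>{0..R}. dist (prim00 (f n) t) (prim00 f0 t) < e"
  proof eventually_elim
    case (elim n)
    show ?case
    proof
      fix t assume t: "t \<in> {0..R}"
      have cont_t: "continuous_on {0..t} (f n)" "continuous_on {0..t} f0"
        using t by (auto intro: continuous_on_subset[OF cont(1)] continuous_on_subset[OF cont(2)])
      have "\<bar>prim00 (\<lambda>s. f n s - f0 s) t\<bar> \<le> e' * t\<^sup>2"
        by (rule prim00_bound[OF continuous_on_diff[OF cont_t]])
           (use t elim in \<open>auto simp: dist_real_def intro: less_imp_le\<close>)
      also have "\<dots> \<le> e' * R\<^sup>2"
        using t \<open>0 < e'\<close> by (intro mult_left_mono power_mono) auto
      also have "\<dots> < e' * (R\<^sup>2 + 1)"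
        using \<open>0 < e'\<close> by simp
      also have "\<dots> = e"
        using \<open>0 < R\<^sup>2 + 1\<close> by (simp add: e'_def)
      finally show "dist (prim00 (f n) t) (prim00 f0 t) < e"
        by (simp add: dist_real_def prim00_diff[OF cont_t])
    qed
  qed
qed

text \<open>\<open>green L f\<close> solves \<open>w'' = f\<close> on \<open>[0, L]\<close> with \<open>w 0 = w L = 0\<close>.\<close>
definition green :: "real \<Rightarrow> (real \<Rightarrow> real) \<Rightarrow> real \<Rightarrow> real" where
  "green L f t = prim00 f t - t * prim00 f L / L"

lemma green_0 [simp]: "green L f 0 = 0"
  by (simp add: green_def prim0_nonpos)

lemma green_right [simp]: "L \<noteq> 0 \<Longrightarrow> green L f L = 0"
  by (simp add: green_def)

lemma green_cong:
  "(\<And>s. s \<in> {0..L} \<Longrightarrow> f s = f' s) \<Longrightarrow> t \<in> {0..L} \<Longrightarrow> green L f t = green L f' t"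
  unfolding green_def by (subst (1 2) prim00_cong[where g=f']) auto

lemma odd_periodic_second_primitive:
  assumes L: "L > 0"
    and f: "continuous_on UNIV f" "odd_fun f" "periodic_fun (2 * L) f"
  obtains U U' where "odd_fun U" "periodic_fun (2 * L) U"
    "\<And>t. (U has_real_derivative U' t) (at t)" "\<And>t. (U' has_real_derivative f t) (at t)"
    "\<And>t. t \<in> {0..L} \<Longrightarrow> U t = green L f t"
proof -
  define \<Phi> where "\<Phi> = prim f"
  define \<Psi> where "\<Psi> = prim \<Phi>"
  have \<Phi>_cont: "continuous_on UNIV \<Phi>"
    unfolding \<Phi>_def by (rule continuous_on_prim[OF f(1)])
  have \<Phi>_even: "\<Phi> (- x) = \<Phi> x" for x
    unfolding \<Phi>_def by (rule prim_even_if_odd[OF f(1,2)])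
  have "\<Phi> (x + 2 * L) = \<Phi> x + \<Phi> (2 * L)" for x
    unfolding \<Phi>_def by (rule prim_periodic_shift[OF f(1,3)])
  moreover from this[of "- L"] have "\<Phi> (2 * L) = 0"
    using \<Phi>_even[of L] by simp
  ultimately have \<Phi>_periodic: "periodic_fun (2 * L) \<Phi>"
    by (simp add: periodic_fun_def)
  have \<Psi>_odd: "odd_fun \<Psi>"
    unfolding \<Psi>_def by (rule prim_odd_if_even[OF \<Phi>_cont \<Phi>_even])
  have \<Psi>_shift: "\<Psi> (x + 2 * L) = \<Psi> x + \<Psi> (2 * L)" for x
    unfolding \<Psi>_def by (rule prim_periodic_shift[OF \<Phi>_cont \<Phi>_periodic])
  from this[of "- L"] \<Psi>_odd have \<Psi>_period: "\<Psi> (2 * L) = 2 * \<Psi> L"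
    by (simp add: odd_fun_def)
  \<comment> \<open>\<open>\<Psi>\<close> drifts by \<open>2 * \<Psi> L\<close> per period; the linear correction removes the drift.\<close>
  show thesis
  proof
    show "odd_fun (\<lambda>t. \<Psi> t - t * \<Psi> L / L)"
      using \<Psi>_odd by (simp add: odd_fun_def)
    show "periodic_fun (2 * L) (\<lambda>t. \<Psi> t - t * \<Psi> L / L)"
      using \<Psi>_shift \<Psi>_period L by (simp add: periodic_fun_def field_simps)
    show "((\<lambda>t. \<Psi> t - t * \<Psi> L / L) has_real_derivative \<Phi> t - \<Psi> L / L) (at t)" for t
      unfolding \<Psi>_def using L
      by (auto intro!: derivative_eq_intros has_real_derivative_prim[OF \<Phi>_cont])
    show "((\<lambda>t. \<Phi> t - \<Psi> L / L) has_real_derivative f t) (at t)" for t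
      unfolding \<Phi>_def by (auto intro!: derivative_eq_intros has_real_derivative_prim[OF f(1)])
    show "\<Psi> t - t * \<Psi> L / L = green L f t" if "t \<in> {0..L}" for t
      using that L prim00_eq_prim_prim[OF f(1), of t] prim00_eq_prim_prim[OF f(1), of L]
      unfolding \<Psi>_def \<Phi>_def green_def by simp
  qed
qed

section \<open>Odd periodic functions\<close>

lemma periodic_fun_int_shift:
  assumes "periodic_fun T u"
  shows "u (t + of_int m * T) = u t"
proof -
  have nat_shift: "u (t + real n * T) = u t" for n t
  proof (induction n arbitrary: t)
    case (Suc n)
    have "u (t + real (Suc n) * T) = u ((t + T) + real n * T)"
      by (simp add: algebra_simps)
    also have "\<dots> = u t"
      using Suc.IH assms by (simp add: periodic_fun_def)
    finally show ?case .
  qed simp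
  show ?thesis
  proof (cases "0 \<le> m")
    case True
    then show ?thesis using nat_shift[of t "nat m"] by simp
  next
    case False
    then show ?thesis using nat_shift[of "t + of_int m * T" "nat (- m)"] by simp
  qed
qed

lemma periodic_fun_frac:
  assumes "T > 0" "periodic_fun T u"
  shows "u (T * frac (t / T)) = u t"
  using periodic_fun_int_shift[OF assms(2), of "T * frac (t / T)" "\<lfloor>t / T\<rfloor>"] assms(1)
  by (simp add: frac_def algebra_simps)

lemma odd_fun_0: "odd_fun u \<Longrightarrow> u 0 = 0"
  unfolding odd_fun_def by (metis add.inverse_neutral equal_neg_zero)

lemma odd_periodic_half_period:
  assumes "odd_fun u" "periodic_fun T u"
  shows "u (T / 2) = 0"
proof -
  have "u (T / 2) = u (- (T / 2) + T)" by simp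
  also have "\<dots> = - u (T / 2)"
    using assms unfolding periodic_fun_def odd_fun_def by metis
  finally show ?thesis by simp
qed

lemma odd_periodic_reduce:
  assumes T: "T > 0"
  obtains s \<sigma> where "s \<in> {0..T/2}" "\<sigma> = 1 \<or> \<sigma> = -1"
    "\<And>u. odd_fun u \<Longrightarrow> periodic_fun T u \<Longrightarrow> u t = \<sigma> * u s"
proof -
  define r where "r = T * frac (t / T)"
  have r: "0 \<le> r" "r < T"
    using T frac_lt_1[of "t / T"] unfolding r_def by auto
  have u_r: "u t = u r" if "periodic_fun T u" for u
    unfolding r_def using periodic_fun_frac[OF T that] by simp
  show thesis
  proof (cases "r \<le> T / 2")
    case True
    then show thesis using that[of r 1] r u_r by auto
  next
    case False
    have "u t = - u (T - r)" if "odd_fun u" "periodic_fun T u" for u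
    proof -
      have "u t = u (- (T - r) + T)" using u_r[OF that(2)] by simp
      also have "\<dots> = - u (T - r)"
        using that unfolding periodic_fun_def odd_fun_def by metis
      finally show ?thesis .
    qed
    then show thesis using that[of "T - r" "-1"] False r by auto
  qed
qed

lemma odd_periodic_eqI:
  assumes "T > 0" "odd_fun u" "periodic_fun T u" "odd_fun w" "periodic_fun T w"
    and "\<And>s. s \<in> {0..T/2} \<Longrightarrow> u s = w s"
  shows "u t = w t"
  using odd_periodic_reduce[OF \<open>T > 0\<close>, of t] assms(2-6) by metis

lemma odd_periodic_abs_le:
  assumes "T > 0" "odd_fun u" "periodic_fun T u"
    and "\<And>s. s \<in> {0..T/2} \<Longrightarrow> \<bar>u s\<bar> \<le> B"
  shows "\<bar>u t\<bar> \<le> B"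
  using odd_periodic_reduce[OF \<open>T > 0\<close>, of t] assms(2-4)
  by (metis abs_minus_cancel abs_mult_pos mult_1 mult_minus1 zero_le_one)

lemma periodic_continuous_on_UNIV:
  assumes P: "P > 0" and per: "periodic_fun P f" and cont: "continuous_on {-P..P} f"
  shows "continuous_on UNIV f"
proof (intro continuous_at_imp_continuous_on ballI)
  fix t
  define m where "m = \<lfloor>t / P\<rfloor>"
  have f_cont: "isCont f (t - of_int m * P)"
  proof (rule continuous_on_interior[OF cont])
    have "t - of_int m * P = P * frac (t / P)"
      using P by (simp add: m_def frac_def algebra_simps)
    then show "t - of_int m * P \<in> interior {-P..P}"
      using P frac_lt_1[of "t / P"] frac_ge_0[of "t / P"]
      by (auto simp: mult_less_cancel_left1 intro: less_le_trans[of _ 0])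
  qed
  have shift_cont: "isCont (\<lambda>y. y - of_int m * P) t"
    by (intro continuous_intros)
  have "isCont (\<lambda>y. f (y - of_int m * P)) t"
    using isCont_o2[OF shift_cont] f_cont by blast
  moreover have "(\<lambda>y. f (y - of_int m * P)) = f"
    using periodic_fun_int_shift[OF per, of "_ - of_int m * P" m] by auto
  ultimately show "isCont f t" by simp
qed

definition odd_reflection :: "real \<Rightarrow> (real \<Rightarrow> real) \<Rightarrow> real \<Rightarrow> real" where
  "odd_reflection L u r = (if r \<le> L then u r else - u (2 * L - r))"

definition odd_periodic_ext :: "real \<Rightarrow> (real \<Rightarrow> real) \<Rightarrow> real \<Rightarrow> real" where
  "odd_periodic_ext L u t = odd_reflection L u (2 * L * frac (t / (2 * L)))"

context
  fixes L :: real and u :: "real \<Rightarrow> real"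
  assumes L: "L > 0" and u: "continuous_on {0..L} u" "u 0 = 0" "u L = 0"
begin

lemma odd_reflection_0: "odd_reflection L u 0 = 0"
  using L u by (simp add: odd_reflection_def)

lemma odd_reflection_2L: "odd_reflection L u (2 * L) = 0"
  using L u by (simp add: odd_reflection_def)

lemma odd_reflection_antisym: "odd_reflection L u (2 * L - r) = - odd_reflection L u r"
  using u by (auto simp: odd_reflection_def)

lemma continuous_on_odd_reflection: "continuous_on {0..2 * L} (odd_reflection L u)"
  unfolding odd_reflection_def
proof (rule continuous_on_cases_1)
  show "continuous_on {t \<in> {0..2 * L}. t \<le> L} u"
    by (rule continuous_on_subset[OF u(1)]) auto
  show "continuous_on {t \<in> {0..2 * L}. L \<le> t} (\<lambda>r. - u (2 * L - r))"
    by (intro continuous_intros continuous_on_compose2[OF u(1)]) auto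
qed (use u in auto)

lemma odd_periodic_ext_eq: "t \<in> {0..<2 * L} \<Longrightarrow> odd_periodic_ext L u t = odd_reflection L u t"
  using L by (simp add: odd_periodic_ext_def frac_eq)

lemma odd_periodic_ext_periodic: "periodic_fun (2 * L) (odd_periodic_ext L u)"
proof -
  have "(t + 2 * L) / (2 * L) = t / (2 * L) + 1" for t
    using L by (simp add: field_simps)
  then show ?thesis
    by (simp add: periodic_fun_def odd_periodic_ext_def frac_1_eq)
qed

lemma odd_periodic_ext_odd: "odd_fun (odd_periodic_ext L u)"
  unfolding odd_fun_def
proof
  fix t
  show "odd_periodic_ext L u (- t) = - odd_periodic_ext L u t"
  proof (cases "t / (2 * L) \<in> \<int>")
    case True
    then have frac_0: "frac (t / (2 * L)) = 0"
      by (simp add: frac_eq_0_iff)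
    show ?thesis
      using True odd_reflection_0 by (simp add: odd_periodic_ext_def frac_neg frac_0)
  next
    case False
    then show ?thesis
      using odd_reflection_antisym
      by (simp add: odd_periodic_ext_def frac_neg right_diff_distrib)
  qed
qed

lemma continuous_on_odd_periodic_ext: "continuous_on UNIV (odd_periodic_ext L u)"
proof (rule periodic_continuous_on_UNIV[of "2 * L"])
  define P where "P = 2 * L"
  have ext_pos: "odd_periodic_ext L u x = odd_reflection L u x" if "x \<in> {0..P}" for x
    using that odd_periodic_ext_eq[of x] odd_reflection_0 odd_reflection_2L L
    by (cases "x = P") (auto simp: odd_periodic_ext_def P_def)
  have ext_neg: "odd_periodic_ext L u x = odd_reflection L u (x + P)" if "x \<in> {-P..0}" for x
    using ext_pos[of "x + P"] odd_periodic_ext_periodic that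
    by (auto simp: P_def periodic_fun_def)
  have "continuous_on {-P..P}
      (\<lambda>x. if x \<le> 0 then odd_reflection L u (x + P) else odd_reflection L u x)"
  proof (rule continuous_on_cases_1)
    show "continuous_on {t \<in> {-P..P}. t \<le> 0} (\<lambda>x. odd_reflection L u (x + P))"
      by (intro continuous_on_compose2[OF continuous_on_odd_reflection] continuous_intros)
         (auto simp: P_def)
    show "continuous_on {t \<in> {-P..P}. 0 \<le> t} (odd_reflection L u)"
      by (rule continuous_on_subset[OF continuous_on_odd_reflection]) (auto simp: P_def)
  qed (use odd_reflection_0 odd_reflection_2L in \<open>auto simp: P_def\<close>)
  then show "continuous_on {-(2 * L)..2 * L} (odd_periodic_ext L u)"
    unfolding P_def[symmetric] by (rule continuous_on_eq) (use ext_pos ext_neg in auto)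
qed (use L odd_periodic_ext_periodic in auto)

end

lemma odd_periodic_solution_of_dirichlet:
  assumes L: "L > 0"
    and g: "continuous_on UNIV g" "odd_fun g"
    and k: "continuous_on UNIV k" "odd_fun k" "periodic_fun (2 * L) k"
    and u: "continuous_on {0..L} u"
    and fixpoint: "\<And>t. t \<in> {0..L} \<Longrightarrow> u t = green L (\<lambda>s. k s - g (u s)) t"
  shows "\<exists>U. C2_solution g k U \<and> odd_fun U \<and> periodic_fun (2 * L) U"
proof -
  have u_0: "u 0 = 0" and u_L: "u L = 0"
    using fixpoint[of 0] fixpoint[of L] L by auto
  define W where "W = odd_periodic_ext L u"
  note W_props = continuous_on_odd_periodic_ext[OF L u u_0 u_L]
    odd_periodic_ext_odd[OF L u u_0 u_L] odd_periodic_ext_periodic[OF L u u_0 u_L]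
  have W_eq: "W t = u t" if "t \<in> {0..L}" for t
    using odd_periodic_ext_eq[OF L u u_0 u_L, of t] that L unfolding W_def
    by (auto simp: odd_reflection_def)
  define f where "f s = k s - g (W s)" for s
  have f: "continuous_on UNIV f" "odd_fun f" "periodic_fun (2 * L) f"
    using W_props k g unfolding f_def W_def odd_fun_def periodic_fun_def
    by (auto intro!: continuous_intros continuous_on_compose2[OF g(1)])
  obtain U U' where U: "odd_fun U" "periodic_fun (2 * L) U"
    "\<And>t. (U has_real_derivative U' t) (at t)" "\<And>t. (U' has_real_derivative f t) (at t)"
    and U_green: "\<And>t. t \<in> {0..L} \<Longrightarrow> U t = green L f t"
    using odd_periodic_second_primitive[OF L f] by blast
  have "U t = W t" if t: "t \<in> {0..L}" for t
  proof -
    have "U t = green L f t"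
      by (rule U_green[OF t])
    also have "\<dots> = green L (\<lambda>s. k s - g (u s)) t"
      by (rule green_cong[OF _ t]) (simp add: f_def W_eq)
    also have "\<dots> = W t"
      using fixpoint[OF t] W_eq[OF t] by simp
    finally show ?thesis .
  qed
  then have U_W: "U t = W t" for t
    using odd_periodic_eqI[of "2 * L" U W t] U W_props L unfolding W_def by simp
  have "C2_solution g k U"
    unfolding C2_solution_def
  proof (intro exI conjI allI)
    show "(U has_real_derivative U' t) (at t)" "(U' has_real_derivative f t) (at t)" for t
      by (fact U(3), fact U(4))
    show "continuous_on UNIV f" by (fact f(1))
    show "f t + g (U t) = k t" for t
      by (simp add: f_def U_W)
  qed
  then show ?thesis using U by blast
qed

section \<open>The a priori bound\<close>

lemma abs_le_by_absorption:
  fixes w :: "real \<Rightarrow> real"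
  assumes S: "compact S" "continuous_on S w" and c: "c < 1"
    and absorb: "\<And>m. 0 \<le> m \<Longrightarrow> (\<forall>s\<in>S. \<bar>w s\<bar> \<le> m) \<Longrightarrow> \<forall>s\<in>S. \<bar>w s\<bar> \<le> a + c * m"
    and s: "s \<in> S"
  shows "(1 - c) * \<bar>w s\<bar> \<le> a"
proof -
  obtain s0 where s0: "s0 \<in> S" and max: "\<And>s. s \<in> S \<Longrightarrow> \<bar>w s\<bar> \<le> \<bar>w s0\<bar>"
    using continuous_attains_sup[OF S(1) _ continuous_on_rabs[OF S(2)]] s by blast
  have "\<bar>w s0\<bar> \<le> a + c * \<bar>w s0\<bar>"
    using absorb[of "\<bar>w s0\<bar>"] max s0 by simp
  moreover have "(1 - c) * \<bar>w s\<bar> \<le> (1 - c) * \<bar>w s0\<bar>"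
    using max[OF s] c by (simp add: mult_left_mono)
  ultimately show ?thesis by (simp add: algebra_simps)
qed

lemma dirichlet_abs_le_second_derivative:
  fixes u u' u'' :: "real \<Rightarrow> real"
  assumes L: "L > 0"
    and u': "\<And>t. (u has_real_derivative u' t) (at t)"
    and u'': "\<And>t. (u' has_real_derivative u'' t) (at t)"
    and boundary: "u 0 = 0" "u L = 0"
    and bound: "\<And>t. t \<in> {0..L} \<Longrightarrow> \<bar>u'' t\<bar> \<le> C"
    and t: "t \<in> {0..L}"
  shows "\<bar>u t\<bar> \<le> C * L\<^sup>2"
proof -
  have "0 \<le> C" using bound[of 0] L by force
  obtain c where c: "0 < c" "c < L" "u L - u 0 = (L - 0) * u' c"
    using MVT2[OF L, of u u'] u' by blast
  then have u'_c: "u' c = 0" using L boundary by simp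
  have u'_bound: "\<bar>u' r\<bar> \<le> C * L" if r: "r \<in> {0..L}" for r
  proof (cases "r = c")
    case False
    define a where "a = min r c"
    define b where "b = max r c"
    have "a < b" using False unfolding a_def b_def by auto
    then obtain z where z: "a < z" "z < b" "u' b - u' a = (b - a) * u'' z"
      using MVT2[of a b u' u''] u'' by blast
    have z_in: "z \<in> {0..L}"
      using z r c unfolding a_def b_def by auto
    have "\<bar>u' r\<bar> = \<bar>u' b - u' a\<bar>"
      using u'_c unfolding a_def b_def by (auto simp: min_def max_def)
    also have "\<dots> = \<bar>b - a\<bar> * \<bar>u'' z\<bar>"
      using z by (simp add: abs_mult)
    also have "\<dots> \<le> L * C"
      using bound[OF z_in] r c by (intro mult_mono) (auto simp: a_def b_def)
    finally show ?thesis by (simp add: mult.commute)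
  qed (use u'_c \<open>0 \<le> C\<close> L in simp)
  show ?thesis
  proof (cases "t = 0")
    case False
    then have "0 < t" using t by simp
    then obtain z where z: "0 < z" "z < t" "u t - u 0 = (t - 0) * u' z"
      using MVT2[of 0 t u u'] u' by blast
    have "\<bar>u t\<bar> = t * \<bar>u' z\<bar>"
      using z boundary by (simp add: abs_mult)
    also have "\<dots> \<le> L * (C * L)"
      using u'_bound[of z] z t by (intro mult_mono) auto
    finally show ?thesis by (simp add: power2_eq_square algebra_simps)
  qed (use boundary \<open>0 \<le> C\<close> in simp)
qed

lemma dirichlet_apriori_bound:
  fixes u u' u'' g k :: "real \<Rightarrow> real"
  assumes L: "L > 0" and eps: "0 \<le> \<epsilon>" "\<epsilon> * L\<^sup>2 \<le> 1/4"
    and g_bound: "\<And>x. \<bar>g x\<bar> \<le> M + \<epsilon> * \<bar>x\<bar>"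
    and k_bound: "\<And>t. t \<in> {0..L} \<Longrightarrow> \<bar>k t\<bar> \<le> K"
    and u': "\<And>t. (u has_real_derivative u' t) (at t)"
    and u'': "\<And>t. (u' has_real_derivative u'' t) (at t)"
    and equation: "\<And>t. u'' t + g (u t) = k t"
    and boundary: "u 0 = 0" "u L = 0"
    and t: "t \<in> {0..L}"
  shows "\<bar>u t\<bar> \<le> 2 * L\<^sup>2 * (K + M)"
proof -
  have "0 \<le> K + M"
    using k_bound[of 0] g_bound[of 0] L by force
  have "continuous_on {0..L} u"
    using u' by (meson DERIV_isCont continuous_at_imp_continuous_on)
  then have "(1 - 1/4) * \<bar>u t\<bar> \<le> L\<^sup>2 * (K + M)"
  proof (rule abs_le_by_absorption[OF compact_Icc _ _ _ t])
    fix m :: real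
    assume "0 \<le> m" and m: "\<forall>s\<in>{0..L}. \<bar>u s\<bar> \<le> m"
    have "\<bar>u'' s\<bar> \<le> K + M + \<epsilon> * m" if s: "s \<in> {0..L}" for s
    proof -
      have "\<bar>u'' s\<bar> \<le> \<bar>k s\<bar> + \<bar>g (u s)\<bar>"
        using equation[of s] by (simp add: eq_diff_eq[symmetric])
      also have "\<dots> \<le> K + (M + \<epsilon> * m)"
        using k_bound[OF s] g_bound[of "u s"] m s eps(1) mult_left_mono[of "\<bar>u s\<bar>" m \<epsilon>] by auto
      finally show ?thesis by simp
    qed
    then have "\<bar>u s\<bar> \<le> (K + M + \<epsilon> * m) * L\<^sup>2" if "s \<in> {0..L}" for s
      by (intro dirichlet_abs_le_second_derivative[OF L u' u'' boundary _ that])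
    moreover have "(K + M + \<epsilon> * m) * L\<^sup>2 \<le> L\<^sup>2 * (K + M) + 1/4 * m"
      using mult_right_mono[OF eps(2) \<open>0 \<le> m\<close>] by (simp add: algebra_simps)
    ultimately show "\<forall>s\<in>{0..L}. \<bar>u s\<bar> \<le> L\<^sup>2 * (K + M) + 1/4 * m"
      by (meson order.trans)
  qed simp
  then show ?thesis
    using \<open>0 \<le> K + M\<close> by (simp add: algebra_simps)
qed

section \<open>Approximation by delay equations\<close>

lemma uniform_limit_compose_continuous:
  fixes g :: "real \<Rightarrow> real" and w :: "'a \<Rightarrow> 'b::topological_space \<Rightarrow> real"
  assumes g: "continuous_on UNIV g" and S: "compact S" "continuous_on S w0"
    and lim: "uniform_limit S w w0 F"
  shows "uniform_limit S (\<lambda>n s. g (w n s)) (\<lambda>s. g (w0 s)) F"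
proof -
  obtain R where R: "\<And>s. s \<in> S \<Longrightarrow> \<bar>w0 s\<bar> \<le> R"
    using compact_imp_bounded[OF compact_continuous_image[OF S(2,1)]]
    unfolding bounded_iff by auto
  have "uniformly_continuous_on {-R-1..R+1} g"
    by (rule compact_uniformly_continuous[OF continuous_on_subset[OF g] compact_Icc]) auto
  moreover have "\<forall>\<^sub>F n in F. w n ` S \<subseteq> {-R-1..R+1}"
    using uniform_limitD[OF lim zero_less_one]
    by eventually_elim (use R in \<open>force simp: dist_real_def abs_le_iff\<close>)
  moreover have "w0 ` S \<subseteq> {-R-1..R+1}"
    using R by force
  ultimately show ?thesis
    using uniform_limit_compose[OF lim] by (simp add: comp_def)
qed

text \<open>The method of steps for the delay equation \<open>y'' t = k t - g (y (t - h))\<close> with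
  \<open>y t = v * t\<close> for \<open>t \<le> 0\<close>: the \<open>j\<close>-th iterate is exact for \<open>t \<le> j * h\<close>.\<close>
fun delay_iter ::
  "(real \<Rightarrow> real) \<Rightarrow> (real \<Rightarrow> real) \<Rightarrow> real \<Rightarrow> real \<Rightarrow> nat \<Rightarrow> real \<Rightarrow> real" where
  "delay_iter g k h v 0 t = v * t"
| "delay_iter g k h v (Suc j) t =
     v * t + prim00 (\<lambda>s. k s - g (delay_iter g k h v j (s - h))) t"

declare delay_iter.simps(2) [simp del]

lemma delay_iter_nonpos: "t \<le> 0 \<Longrightarrow> delay_iter g k h v j t = v * t"
  by (cases j) (simp_all add: delay_iter.simps prim0_nonpos)

lemma continuous_on_delay_iter:
  assumes g: "continuous_on UNIV g" and k: "continuous_on UNIV k"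
  shows "continuous_on UNIV (delay_iter g k h v j)"
proof (induction j)
  case 0
  show ?case by (simp add: continuous_intros)
next
  case (Suc j)
  have "continuous_on UNIV (\<lambda>s. k s - g (delay_iter g k h v j (s - h)))"
    by (intro continuous_intros k continuous_on_compose2[OF g] continuous_on_compose2[OF Suc]) auto
  then have "continuous_on UNIV (prim00 (\<lambda>s. k s - g (delay_iter g k h v j (s - h))))"
    by (intro continuous_on_prim0)
  then show ?case
    unfolding delay_iter.simps(2)[abs_def] by (intro continuous_intros)
qed

lemma delay_iter_Suc_eq:
  assumes "t \<le> real j * h"
  shows "delay_iter g k h v (Suc j) t = delay_iter g k h v j t"
  using assms
proof (induction j arbitrary: t)
  case 0
  then show ?case by (simp add: delay_iter.simps prim0_nonpos)
next
  case (Suc j)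
  have "prim00 (\<lambda>s. k s - g (delay_iter g k h v (Suc j) (s - h))) t
      = prim00 (\<lambda>s. k s - g (delay_iter g k h v j (s - h))) t"
  proof (rule prim00_cong)
    fix s assume "s \<in> {0..t}"
    then have "s - h \<le> real j * h" using Suc.prems by (auto simp: algebra_simps)
    then show "k s - g (delay_iter g k h v (Suc j) (s - h))
        = k s - g (delay_iter g k h v j (s - h))"
      using Suc.IH by simp
  qed
  then show ?case
    by (simp add: delay_iter.simps(2)[of _ _ _ _ "Suc j"] delay_iter.simps(2)[of _ _ _ _ j])
qed

lemma delay_iter_equation:
  assumes "0 \<le> h" "L \<le> real N * h" "t \<le> L"
  shows "delay_iter g k h v (Suc N) t
    = v * t + prim00 (\<lambda>s. k s - g (delay_iter g k h v (Suc N) (s - h))) t"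
proof -
  have "prim00 (\<lambda>s. k s - g (delay_iter g k h v N (s - h))) t
      = prim00 (\<lambda>s. k s - g (delay_iter g k h v (Suc N) (s - h))) t"
  proof (rule prim00_cong)
    fix s assume "s \<in> {0..t}"
    then have "s - h \<le> real N * h" using assms by auto
    then show "k s - g (delay_iter g k h v N (s - h))
        = k s - g (delay_iter g k h v (Suc N) (s - h))"
      by (simp add: delay_iter_Suc_eq)
  qed
  then show ?thesis by (simp add: delay_iter.simps(2))
qed

lemma uniform_limit_scale_at:
  "uniform_limit {-R..R} (\<lambda>v t. v * t) (\<lambda>t. v0 * t) (at (v0::real))"
proof (rule uniform_limitI)
  fix e :: real assume "0 < e"
  then have "0 < e / (\<bar>R\<bar> + 1)" by simp
  from tendstoD[OF tendsto_ident_at this, of v0 UNIV]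
  show "\<forall>\<^sub>F v in at v0. \<forall>t\<in>{-R..R}. dist (v * t) (v0 * t) < e"
  proof eventually_elim
    case (elim v)
    show ?case
    proof
      fix t assume "t \<in> {-R..R}"
      then have "\<bar>v - v0\<bar> * \<bar>t\<bar> \<le> \<bar>v - v0\<bar> * (\<bar>R\<bar> + 1)"
        by (intro mult_left_mono) auto
      also have "\<dots> < e"
        using elim by (simp add: dist_real_def field_simps)
      finally show "dist (v * t) (v0 * t) < e"
        by (simp add: dist_real_def abs_mult[symmetric] left_diff_distrib)
    qed
  qed
qed

lemma delay_iter_uniform_limit_param:
  assumes g: "continuous_on UNIV g" and k: "continuous_on UNIV k" and h: "0 \<le> h"
  shows "uniform_limit {-R..R} (\<lambda>v. delay_iter g k h v j) (delay_iter g k h v0 j) (at v0)"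
proof (induction j arbitrary: R)
  case 0
  show ?case
    using uniform_limit_scale_at by simp
next
  case (Suc j)
  define f where "f = (\<lambda>v s. k s - g (delay_iter g k h v j (s - h)))"
  have f_cont: "continuous_on A (f v)" for v A
    unfolding f_def
    by (intro continuous_intros continuous_on_subset[OF k] continuous_on_compose2[OF g]
        continuous_on_compose2[OF continuous_on_delay_iter[OF g k]]) auto
  have "uniform_limit {0..\<bar>R\<bar>} (\<lambda>v s. delay_iter g k h v j (s - h))
      (\<lambda>s. delay_iter g k h v0 j (s - h)) (at v0)"
  proof (rule uniform_limitI)
    fix e :: real assume "0 < e"
    from uniform_limitD[OF Suc.IH[of "\<bar>R\<bar> + h"] this]
    show "\<forall>\<^sub>F v in at v0. \<forall>s\<in>{0..\<bar>R\<bar>}.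
        dist (delay_iter g k h v j (s - h)) (delay_iter g k h v0 j (s - h)) < e"
    proof eventually_elim
      case (elim v)
      show ?case
      proof
        fix s assume "s \<in> {0..\<bar>R\<bar>}"
        then have "s - h \<in> {-(\<bar>R\<bar> + h)..\<bar>R\<bar> + h}" using h by auto
        with elim show "dist (delay_iter g k h v j (s - h)) (delay_iter g k h v0 j (s - h)) < e" ..
      qed
    qed
  qed
  moreover have "continuous_on {0..\<bar>R\<bar>} (\<lambda>s. delay_iter g k h v0 j (s - h))"
    by (intro continuous_on_compose2[OF continuous_on_delay_iter[OF g k]] continuous_intros) auto
  ultimately have "uniform_limit {0..\<bar>R\<bar>} (\<lambda>v s. g (delay_iter g k h v j (s - h)))
      (\<lambda>s. g (delay_iter g k h v0 j (s - h))) (at v0)"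
    using uniform_limit_compose_continuous[OF g compact_Icc] by blast
  from uniform_limit_minus[OF uniform_limit_const[where c=k] this]
  have "uniform_limit {0..\<bar>R\<bar>} f (f v0) (at v0)"
    by (simp add: f_def)
  then have "uniform_limit {0..\<bar>R\<bar>} (\<lambda>v. prim00 (f v)) (prim00 (f v0)) (at v0)"
    by (rule uniform_limit_prim00) (rule f_cont)+
  moreover have "uniform_limit {-\<bar>R\<bar>..0} (\<lambda>v. prim00 (f v)) (prim00 (f v0)) (at v0)"
    by (rule uniform_limitI) (simp add: prim0_nonpos)
  ultimately have "uniform_limit ({0..\<bar>R\<bar>} \<union> {-\<bar>R\<bar>..0}) (\<lambda>v. prim00 (f v)) (prim00 (f v0)) (at v0)"
    by (rule uniform_limit_on_Un)
  then have "uniform_limit {-R..R} (\<lambda>v. prim00 (f v)) (prim00 (f v0)) (at v0)"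
    by (rule uniform_limit_on_subset) auto
  from uniform_limit_add[OF uniform_limit_scale_at this]
  show ?case
    by (simp add: delay_iter.simps(2)[abs_def] f_def)
qed

lemma continuous_on_delay_iter_param:
  assumes g: "continuous_on UNIV g" and k: "continuous_on UNIV k" and h: "0 \<le> h"
  shows "continuous_on UNIV (\<lambda>v. delay_iter g k h v j t)"
proof (intro continuous_at_imp_continuous_on ballI)
  fix v0 :: real
  have "t \<in> {-\<bar>t\<bar>..\<bar>t\<bar>}" by auto
  from tendsto_uniform_limitI[OF delay_iter_uniform_limit_param[OF g k h] this]
  show "isCont (\<lambda>v. delay_iter g k h v j t) v0"
    unfolding isCont_def .
qed

lemma lipschitz_Arzela_Ascoli:
  fixes w :: "nat \<Rightarrow> real \<Rightarrow> real"
  assumes S: "compact S" and bound: "\<And>n x. x \<in> S \<Longrightarrow> \<bar>w n x\<bar> \<le> B"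
    and lip: "\<And>n. D-lipschitz_on S (w n)"
  obtains u r where "continuous_on S u" "strict_mono (r :: nat \<Rightarrow> nat)"
    "uniform_limit S (\<lambda>n. w (r n)) u sequentially"
proof -
  have "0 \<le> D" using lipschitz_on_nonneg[OF lip] .
  obtain u r where "continuous_on S u" "strict_mono (r :: nat \<Rightarrow> nat)"
    and conv: "\<And>e. 0 < e \<Longrightarrow> \<exists>N. \<forall>n x. n \<ge> N \<and> x \<in> S \<longrightarrow> norm (w (r n) x - u x) < e"
  proof (rule Arzela_Ascoli[OF S, of w B])
    fix x e :: real assume x: "x \<in> S" and e: "0 < e"
    show "\<exists>d>0. \<forall>n y. y \<in> S \<and> norm (x - y) < d \<longrightarrow> norm (w n x - w n y) < e"
    proof (intro exI[of _ "e / (D + 1)"] conjI allI impI)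
      show "0 < e / (D + 1)" using e \<open>0 \<le> D\<close> by simp
      fix n y assume y: "y \<in> S \<and> norm (x - y) < e / (D + 1)"
      have "norm (w n x - w n y) \<le> D * norm (x - y)"
        using lipschitz_on_normD[OF lip x] y by blast
      also have "\<dots> \<le> (D + 1) * norm (x - y)" by (simp add: algebra_simps)
      also have "\<dots> < e"
        using y \<open>0 \<le> D\<close> by (simp add: field_simps)
      finally show "norm (w n x - w n y) < e" .
    qed
  qed (use bound in auto)
  moreover from conv have "uniform_limit S (\<lambda>n. w (r n)) u sequentially"
    unfolding uniform_limit_sequentially_iff dist_norm by blast
  ultimately show thesis using that by blast
qed

lemma uniform_limit_delay:
  fixes w :: "nat \<Rightarrow> real \<Rightarrow> real" and h :: "nat \<Rightarrow> real"
  assumes lim: "uniform_limit {0..L} w u sequentially"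
    and h: "h \<longlonglongrightarrow> 0" "\<And>n. 0 \<le> h n" and lip: "\<And>n. D-lipschitz_on {-h n..L} (w n)"
  shows "uniform_limit {0..L} (\<lambda>n s. w n (s - h n)) u sequentially"
proof (rule uniform_limitI)
  fix e :: real assume "0 < e"
  then have "0 < e / 2" by simp
  have "(\<lambda>n. D * h n) \<longlonglongrightarrow> 0"
    using tendsto_mult[OF tendsto_const h(1), of D] by simp
  from uniform_limitD[OF lim \<open>0 < e / 2\<close>] order_tendstoD(2)[OF this \<open>0 < e / 2\<close>]
  show "\<forall>\<^sub>F n in sequentially. \<forall>s\<in>{0..L}. dist (w n (s - h n)) (u s) < e"
  proof eventually_elim
    case (elim n)
    show ?case
    proof
      fix s assume s: "s \<in> {0..L}"
      have "dist (w n (s - h n)) (w n s) \<le> D * h n"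
        using lipschitz_onD[OF lip, of "s - h n" n s] s h(2)[of n] by (simp add: dist_real_def)
      moreover have "dist (w n s) (u s) < e / 2"
        using elim s by blast
      ultimately show "dist (w n (s - h n)) (u s) < e"
        using elim dist_triangle[of "w n (s - h n)" "u s" "w n s"] by linarith
    qed
  qed
qed

lemma dirichlet_solution_of_delay_limit:
  fixes w :: "nat \<Rightarrow> real \<Rightarrow> real" and h :: "nat \<Rightarrow> real"
  assumes g: "continuous_on UNIV g" and k: "continuous_on UNIV k" and L: "0 < L"
    and h: "h \<longlonglongrightarrow> 0" "\<And>n. 0 \<le> h n"
    and bound: "\<And>n t. t \<in> {0..L} \<Longrightarrow> \<bar>w n t\<bar> \<le> B"
    and lip: "\<And>n. D-lipschitz_on {-h n..L} (w n)"
    and approx: "\<And>n t. t \<in> {0..L} \<Longrightarrow> w n t = green L (\<lambda>s. k s - g (w n (s - h n))) t"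
  shows "\<exists>u. continuous_on {0..L} u \<and> (\<forall>t\<in>{0..L}. u t = green L (\<lambda>s. k s - g (u s)) t)"
proof -
  have lip0: "D-lipschitz_on {0..L} (w n)" for n
    by (rule lipschitz_on_subset[OF lip]) (use h(2) in auto)
  obtain u r where u: "continuous_on {0..L} u" and r: "strict_mono r"
    and lim: "uniform_limit {0..L} (\<lambda>n. w (r n)) u sequentially"
    by (rule lipschitz_Arzela_Ascoli[OF compact_Icc bound lip0])
  have delayed_lim: "uniform_limit {0..L} (\<lambda>n s. w (r n) (s - h (r n))) u sequentially"
    by (rule uniform_limit_delay[OF lim LIMSEQ_subseq_LIMSEQ[OF h(1) r, unfolded comp_def]])
       (use h(2) lip in auto)
  define f where "f n = (\<lambda>s. k s - g (w n (s - h n)))" for n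
  define f_lim where "f_lim = (\<lambda>s. k s - g (u s))"
  have f_cont: "continuous_on {0..L} (f n)" for n
    unfolding f_def
    by (intro continuous_intros continuous_on_subset[OF k] continuous_on_compose2[OF g]
        continuous_on_compose2[OF lipschitz_on_continuous_on[OF lip]]) (use h(2) in auto)
  have f_lim_cont: "continuous_on {0..L} f_lim"
    unfolding f_lim_def
    by (intro continuous_intros continuous_on_subset[OF k] continuous_on_compose2[OF g u]) auto
  from uniform_limit_minus[OF uniform_limit_const[where c=k]
      uniform_limit_compose_continuous[OF g compact_Icc u delayed_lim]]
  have "uniform_limit {0..L} (\<lambda>n. f (r n)) f_lim sequentially"
    by (simp add: f_def f_lim_def)
  then have prim_lim: "uniform_limit {0..L} (\<lambda>n. prim00 (f (r n))) (prim00 f_lim) sequentially"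
    by (rule uniform_limit_prim00) (rule f_cont f_lim_cont)+
  have "u t = green L f_lim t" if t: "t \<in> {0..L}" for t
  proof (rule LIMSEQ_unique)
    show "(\<lambda>n. w (r n) t) \<longlonglongrightarrow> u t"
      by (rule tendsto_uniform_limitI[OF lim t])
    have "L \<in> {0..L}" "L \<noteq> 0" using L by auto
    with tendsto_uniform_limitI[OF prim_lim t] tendsto_uniform_limitI[OF prim_lim]
    have "(\<lambda>n. green L (f (r n)) t) \<longlonglongrightarrow> green L f_lim t"
      unfolding green_def by (intro tendsto_intros) auto
    then show "(\<lambda>n. w (r n) t) \<longlonglongrightarrow> green L f_lim t"
      using approx[OF t] by (simp add: f_def)
  qed
  then show ?thesis
    using u unfolding f_lim_def by blast
qed

locale sublinear_dirichlet =
  fixes g k :: "real \<Rightarrow> real" and L K M \<epsilon> :: real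
  assumes g: "continuous_on UNIV g" and k: "continuous_on UNIV k"
    and L: "0 < L" and eps: "0 \<le> \<epsilon>" "\<epsilon> * L\<^sup>2 \<le> 1/4"
    and g_bound: "\<And>x. \<bar>g x\<bar> \<le> M + \<epsilon> * \<bar>x\<bar>"
    and k_bound: "\<And>t. t \<in> {0..L} \<Longrightarrow> \<bar>k t\<bar> \<le> K"
begin

lemma KM_nonneg: "0 \<le> K + M"
  using k_bound[of 0] g_bound[of 0] L by force

text \<open>Shooting slopes range over \<open>[-V, V]\<close>; all approximate solutions are bounded by \<open>B\<close>
  and \<open>D\<close>-Lipschitz, independently of the delay.\<close>
definition V where "V = 3 * L * (K + M) + 1"
definition B where "B = 2 * (V * L + L\<^sup>2 * (K + M))"
definition D where "D = V + L * (K + M + \<epsilon> * B)"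

lemma V_pos: "0 < V"
  unfolding V_def using KM_nonneg L by (simp add: add_nonneg_pos)

lemma B_nonneg: "0 \<le> B"
  unfolding B_def using V_pos L KM_nonneg by simp

lemma V_le_D: "V \<le> D"
  unfolding D_def using L KM_nonneg eps(1) B_nonneg by simp

end

locale delay_problem = sublinear_dirichlet +
  fixes h :: real and N :: nat
  assumes h: "0 < h" "h \<le> L" and steps: "L \<le> real N * h"
begin

abbreviation y :: "real \<Rightarrow> real \<Rightarrow> real" where
  "y v \<equiv> delay_iter g k h v (Suc N)"

definition forcing :: "real \<Rightarrow> real \<Rightarrow> real" where
  "forcing v = (\<lambda>s. k s - g (y v (s - h)))"

lemma y_equation: "t \<in> {0..L} \<Longrightarrow> y v t = v * t + prim00 (forcing v) t"
  unfolding forcing_def using delay_iter_equation[OF less_imp_le[OF h(1)] steps] by simp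

lemma continuous_on_forcing: "continuous_on A (forcing v)"
  unfolding forcing_def
  by (intro continuous_intros continuous_on_subset[OF k] continuous_on_compose2[OF g]
      continuous_on_compose2[OF continuous_on_delay_iter[OF g k]]) auto

lemma forcing_bound:
  assumes "s \<in> {0..L}" "\<bar>y v (s - h)\<bar> \<le> m"
  shows "\<bar>forcing v s\<bar> \<le> K + M + \<epsilon> * m"
proof -
  have "\<bar>forcing v s\<bar> \<le> \<bar>k s\<bar> + \<bar>g (y v (s - h))\<bar>"
    unfolding forcing_def by simp
  also have "\<dots> \<le> K + (M + \<epsilon> * m)"
    using k_bound[OF assms(1)] g_bound[of "y v (s - h)"] mult_left_mono[OF assms(2) eps(1)]
    by simp
  finally show ?thesis by simp
qed

lemma prim00_forcing_bound:
  assumes m: "0 \<le> m" "\<And>s. s \<in> {-h..L} \<Longrightarrow> \<bar>y v s\<bar> \<le> m" and t: "t \<in> {0..L}"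
  shows "\<bar>prim00 (forcing v) t\<bar> \<le> L\<^sup>2 * (K + M) + m / 4"
proof -
  have "\<bar>prim00 (forcing v) t\<bar> \<le> (K + M + \<epsilon> * m) * t\<^sup>2"
    by (rule prim00_bound[OF continuous_on_forcing])
       (use t h in \<open>auto intro!: forcing_bound m(2)\<close>)
  also have "\<dots> \<le> (K + M + \<epsilon> * m) * L\<^sup>2"
    using t KM_nonneg eps m by (intro mult_left_mono power_mono) auto
  also have "\<dots> \<le> L\<^sup>2 * (K + M) + m / 4"
    using mult_right_mono[OF eps(2) m(1)] by (simp add: algebra_simps)
  finally show ?thesis .
qed

lemma y_bound:
  assumes t: "t \<in> {-h..L}"
  shows "\<bar>y v t\<bar> \<le> 2 * (\<bar>v\<bar> * L + L\<^sup>2 * (K + M))"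
proof -
  have "continuous_on {-h..L} (y v)"
    by (rule continuous_on_subset[OF continuous_on_delay_iter[OF g k]]) simp
  then have "(1 - 1/4) * \<bar>y v t\<bar> \<le> \<bar>v\<bar> * L + L\<^sup>2 * (K + M)"
  proof (rule abs_le_by_absorption[OF compact_Icc _ _ _ t])
    fix m :: real
    assume m: "0 \<le> m" "\<forall>s\<in>{-h..L}. \<bar>y v s\<bar> \<le> m"
    show "\<forall>s\<in>{-h..L}. \<bar>y v s\<bar> \<le> \<bar>v\<bar> * L + L\<^sup>2 * (K + M) + 1/4 * m"
    proof
      fix s assume s: "s \<in> {-h..L}"
      show "\<bar>y v s\<bar> \<le> \<bar>v\<bar> * L + L\<^sup>2 * (K + M) + 1/4 * m"
      proof (cases "s \<le> 0")
        case True
        have "\<bar>s\<bar> \<le> L" using s True h by auto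
        then have "\<bar>y v s\<bar> \<le> \<bar>v\<bar> * L"
          by (simp add: delay_iter_nonpos[OF True] abs_mult mult_left_mono)
        moreover have "0 \<le> L\<^sup>2 * (K + M)" using KM_nonneg by simp
        ultimately show ?thesis using m(1) by simp
      next
        case False
        then have s': "s \<in> {0..L}" using s by simp
        have "\<bar>v * s\<bar> \<le> \<bar>v\<bar> * L"
          using s' by (simp add: abs_mult mult_left_mono)
        then have "\<bar>y v s\<bar> \<le> \<bar>v\<bar> * L + \<bar>prim00 (forcing v) s\<bar>"
          using abs_triangle_ineq[of "v * s" "prim00 (forcing v) s"]
          by (simp add: y_equation[OF s'])
        moreover have "\<bar>prim00 (forcing v) s\<bar> \<le> L\<^sup>2 * (K + M) + m / 4"
          using prim00_forcing_bound[OF m(1) _ s'] m(2) by blast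
        ultimately show ?thesis by simp
      qed
    qed
  qed simp
  then show ?thesis
    using KM_nonneg L by (simp add: algebra_simps)
qed

lemma y_L_bound: "\<bar>y v L - v * L\<bar> \<le> L\<^sup>2 * (K + M) + (\<bar>v\<bar> * L + L\<^sup>2 * (K + M)) / 2"
proof -
  have "\<bar>y v L - v * L\<bar> = \<bar>prim00 (forcing v) L\<bar>"
    using y_equation[of L v] L by simp
  also have "\<dots> \<le> L\<^sup>2 * (K + M) + 2 * (\<bar>v\<bar> * L + L\<^sup>2 * (K + M)) / 4"
    by (rule prim00_forcing_bound) (use y_bound KM_nonneg L in auto)
  finally show ?thesis by linarith
qed

lemma shooting: "\<exists>v. \<bar>v\<bar> \<le> V \<and> y v L = 0"
proof -
  have VL: "V * L = 3 * (L\<^sup>2 * (K + M)) + L"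
    unfolding V_def by (simp add: algebra_simps power2_eq_square)
  have "0 \<le> y V L"
    using y_L_bound[of V] V_pos VL L by (auto simp: abs_le_iff)
  moreover have "y (- V) L \<le> 0"
    using y_L_bound[of "- V"] V_pos VL L by (auto simp: abs_le_iff)
  moreover have "continuous_on {-V..V} (\<lambda>v. y v L)"
    by (rule continuous_on_subset[OF continuous_on_delay_iter_param[OF g k]]) (use h in auto)
  ultimately obtain v where "-V \<le> v" "v \<le> V" "y v L = 0"
    using IVT'[of "\<lambda>v. y v L" "-V" 0 V] V_pos by auto
  then show ?thesis by (auto simp: abs_le_iff)
qed

lemma forcing_bound_B:
  assumes v: "\<bar>v\<bar> \<le> V" and s: "s \<in> {0..L}"
  shows "\<bar>forcing v s\<bar> \<le> K + M + \<epsilon> * B"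
proof (rule forcing_bound[OF s])
  have "\<bar>v\<bar> * L \<le> V * L" using v L by (intro mult_right_mono) auto
  then have "2 * (\<bar>v\<bar> * L + L\<^sup>2 * (K + M)) \<le> B"
    unfolding B_def by simp
  moreover have "\<bar>y v (s - h)\<bar> \<le> 2 * (\<bar>v\<bar> * L + L\<^sup>2 * (K + M))"
    by (rule y_bound) (use s h in auto)
  ultimately show "\<bar>y v (s - h)\<bar> \<le> B"
    by simp
qed

lemma y_lipschitz_nonneg:
  assumes v: "\<bar>v\<bar> \<le> V"
  shows "D-lipschitz_on {0..L} (y v)"
proof (rule lipschitz_on_leI)
  have C: "0 \<le> K + M + \<epsilon> * B"
    using KM_nonneg eps(1) B_nonneg by simp
  fix s t assume st: "s \<in> {0..L}" "t \<in> {0..L}" "s \<le> t"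
  have "\<bar>prim00 (forcing v) t - prim00 (forcing v) s\<bar> \<le> (K + M + \<epsilon> * B) * t * (t - s)"
    by (rule prim00_diff_bound[OF continuous_on_forcing]) (use st forcing_bound_B[OF v] in auto)
  also have "\<dots> \<le> (K + M + \<epsilon> * B) * L * (t - s)"
    using st C by (intro mult_right_mono mult_left_mono) auto
  moreover have "y v t - y v s = v * (t - s) + (prim00 (forcing v) t - prim00 (forcing v) s)"
    using st by (simp add: y_equation algebra_simps)
  ultimately have "dist (y v s) (y v t) \<le> \<bar>v\<bar> * (t - s) + (K + M + \<epsilon> * B) * L * (t - s)"
    using st abs_triangle_ineq[of "v * (t - s)" "prim00 (forcing v) t - prim00 (forcing v) s"]
    by (simp add: dist_real_def abs_minus_commute[of "y v s"] abs_mult)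
  also have "\<dots> \<le> D * dist s t"
    using mult_right_mono[of "\<bar>v\<bar>" V "t - s"] st v
    by (simp add: D_def dist_real_def algebra_simps)
  finally show "dist (y v s) (y v t) \<le> D * dist s t" .
qed (use V_pos V_le_D in simp)

lemma y_lipschitz:
  assumes v: "\<bar>v\<bar> \<le> V"
  shows "D-lipschitz_on {-h..L} (y v)"
proof -
  have "D-lipschitz_on {-h..0} (y v)"
  proof (rule lipschitz_onI)
    fix s t assume "s \<in> {-h..0}" "t \<in> {-h..0}"
    then have "dist (y v s) (y v t) = \<bar>v\<bar> * dist s t"
      by (simp add: delay_iter_nonpos dist_real_def abs_mult[symmetric] algebra_simps)
    also have "\<dots> \<le> D * dist s t"
      using v V_le_D by (intro mult_right_mono) auto
    finally show "dist (y v s) (y v t) \<le> D * dist s t" .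
  qed (use V_pos V_le_D in simp)
  then show ?thesis
    using lipschitz_on_concat[of D "-h" 0 "y v" L "y v"] y_lipschitz_nonneg[OF v] L h by simp
qed

lemma delay_approximation:
  "\<exists>w. (\<forall>t\<in>{-h..L}. \<bar>w t\<bar> \<le> B) \<and> D-lipschitz_on {-h..L} w \<and>
       (\<forall>t\<in>{0..L}. w t = green L (\<lambda>s. k s - g (w (s - h))) t)"
proof -
  obtain v where v: "\<bar>v\<bar> \<le> V" "y v L = 0"
    using shooting by blast
  have "\<bar>y v t\<bar> \<le> B" if "t \<in> {-h..L}" for t
    using y_bound[OF that, of v] v L by (auto simp: B_def intro: order.trans mult_right_mono)
  moreover have "y v t = green L (forcing v) t" if "t \<in> {0..L}" for t
  proof -
    have vL: "v * L = - prim00 (forcing v) L"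
      using y_equation[of L v] v(2) L by simp
    have "y v t = prim00 (forcing v) t + t * (v * L) / L"
      using y_equation[OF that] L by simp
    then show ?thesis
      unfolding vL green_def by simp
  qed
  ultimately show ?thesis
    using y_lipschitz[OF v(1)] unfolding forcing_def by blast
qed

end

lemma (in sublinear_dirichlet) dirichlet_solution_exists:
  "\<exists>u. continuous_on {0..L} u \<and> (\<forall>t\<in>{0..L}. u t = green L (\<lambda>s. k s - g (u s)) t)"
proof -
  define h where "h n = L / real (Suc n)" for n
  have "\<exists>w. (\<forall>t\<in>{-h n..L}. \<bar>w t\<bar> \<le> B) \<and> D-lipschitz_on {-h n..L} w \<and>
      (\<forall>t\<in>{0..L}. w t = green L (\<lambda>s. k s - g (w (s - h n))) t)" for n
  proof -
    have "delay_problem_axioms L (h n) (Suc n)"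
      by unfold_locales (use L in \<open>simp_all add: h_def divide_le_eq\<close>)
    then interpret delay_problem g k L K M \<epsilon> "h n" "Suc n"
      by (intro delay_problem.intro sublinear_dirichlet_axioms)
    show ?thesis by (rule delay_approximation)
  qed
  then obtain w where w: "\<And>n. (\<forall>t\<in>{-h n..L}. \<bar>w n t\<bar> \<le> B) \<and> D-lipschitz_on {-h n..L} (w n) \<and>
      (\<forall>t\<in>{0..L}. w n t = green L (\<lambda>s. k s - g (w n (s - h n))) t)"
    by metis
  have "h = (\<lambda>n. L * inverse (real (Suc n)))"
    by (simp add: fun_eq_iff h_def divide_inverse)
  then have "h \<longlonglongrightarrow> 0"
    using tendsto_mult[OF tendsto_const LIMSEQ_inverse_real_of_nat, of L] by simp
  moreover have "0 \<le> h n" for n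
    using L by (simp add: h_def)
  ultimately show ?thesis
  proof (rule dirichlet_solution_of_delay_limit[OF g k L])
    show "\<bar>w n t\<bar> \<le> B" if "t \<in> {0..L}" for n t
    proof -
      have "t \<in> {-h n..L}" using that \<open>0 \<le> h n\<close> by auto
      then show ?thesis using w[of n] by blast
    qed
    show "D-lipschitz_on {-h n..L} (w n)" for n
      using w[of n] by blast
    show "w n t = green L (\<lambda>s. k s - g (w n (s - h n))) t" if "t \<in> {0..L}" for n t
      using w[of n] that by blast
  qed
qed

lemma (in sublinear_dirichlet) odd_periodic_solution_exists:
  assumes "odd_fun g" "odd_fun k" "periodic_fun (2 * L) k"
  shows "\<exists>U. C2_solution g k U \<and> odd_fun U \<and> periodic_fun (2 * L) U"
  using dirichlet_solution_exists odd_periodic_solution_of_dirichlet[OF L g assms(1) k assms(2,3)]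
  by blast

lemma (in sublinear_dirichlet) odd_periodic_solution_bound:
  assumes sol: "C2_solution g k u" "odd_fun u" "periodic_fun (2 * L) u"
  shows "\<bar>u t\<bar> \<le> 2 * L\<^sup>2 * (K + M)"
proof (rule odd_periodic_abs_le[OF _ sol(2,3)])
  obtain u' u'' where u': "\<And>t. (u has_real_derivative u' t) (at t)"
    and u'': "\<And>t. (u' has_real_derivative u'' t) (at t)" and eq: "\<And>t. u'' t + g (u t) = k t"
    using sol(1) unfolding C2_solution_def by blast
  have "u 0 = 0" "u L = 0"
    using odd_fun_0[OF sol(2)] odd_periodic_half_period[OF sol(2,3)] by simp_all
  from dirichlet_apriori_bound[OF L eps g_bound k_bound u' u'' eq this]
  show "\<bar>u s\<bar> \<le> 2 * L\<^sup>2 * (K + M)" if "s \<in> {0..2 * L / 2}" for s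
    using that by simp
qed (use L in simp)

theorem theorem1:
  fixes T :: real and g k :: "real \<Rightarrow> real"
  assumes "T > 0"
    and "continuous_on UNIV g" and "odd_fun g" and "sublinear g"
    and "continuous_on UNIV k" and "odd_fun k" and "periodic_fun T k"
    and "(1 / T) * integral {0..T} k = 0"
  shows "(\<exists>u. C2_solution g k u \<and> odd_fun u \<and> periodic_fun T u) \<and>
         (\<exists>B. \<forall>u. C2_solution g k u \<and> odd_fun u \<and> periodic_fun T u \<longrightarrow>
                 (\<forall>t. \<bar>u t\<bar> \<le> B))"
proof -
  define L where "L = T / 2"
  have L: "0 < L" and T_eq: "T = 2 * L"
    using \<open>T > 0\<close> by (auto simp: L_def)
  obtain K where K: "\<And>t. t \<in> {0..L} \<Longrightarrow> \<bar>k t\<bar> \<le> K"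
    using compact_imp_bounded[OF
        compact_continuous_image[OF continuous_on_subset[OF \<open>continuous_on UNIV k\<close>] compact_Icc]]
    unfolding bounded_iff by (metis image_eqI real_norm_def subset_UNIV)
  define \<epsilon> where "\<epsilon> = 1 / (4 * L\<^sup>2)"
  have \<epsilon>: "0 < \<epsilon>" "\<epsilon> * L\<^sup>2 \<le> 1/4"
    using L by (auto simp: \<epsilon>_def)
  obtain M where M: "\<And>x. \<bar>g x\<bar> \<le> M + \<epsilon> * \<bar>x\<bar>"
    using \<open>sublinear g\<close> \<epsilon>(1) unfolding sublinear_def by blast
  interpret sublinear_dirichlet g k L K M \<epsilon>
    using assms(2,5) L \<epsilon> M K by unfold_locales auto
  show ?thesis
    using odd_periodic_solution_exists[OF \<open>odd_fun g\<close> \<open>odd_fun k\<close>] \<open>periodic_fun T k\<close>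
      odd_periodic_solution_bound unfolding T_eq by blast
qed

end
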